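(* Let $\Omega$ be a countably infinite set and $G$ a subgroup of $S=\mathrm{Sym}(\Omega)$. Suppose there exist two sequences $(\alpha_i)_{i\in\omega},(\beta_i)_{i\in\omega}$ of elements of $\Omega$, all of the elements $\alpha_i,\beta_i$ being distinct, such that for every $(\gamma_i)\in\prod_{i\in\omega}\{\alpha_i,\beta_i\}$ there exists $g\in G$ with $\gamma_i=\alpha_ig$ for all $i$. Then $S_{(A_0)}\preccurlyeq G$, where $A_0$ is a partition of $\Omega$ having infinitely many $1$-element members, infinitely many $2$-element members, and no other members.
   Context: $\mathrm{Sym}(\Omega)$ is the group of all permutations of $\Omega$, acting on the right. For a partition $A$ of $\Omega$, $S_{(A)}=\{f\in S:\Sigma f=\Sigma\ \forall\Sigma\in A\}$ (such $A_0$ is unique up to a permutation of $\Omega$, so $S_{(A_0)}$ is determined up to conjugacy). For subgroups $G_1,G_2\le S$, $G_1\preccurlyeq G_2$ means there is a finite $U\subseteq S$ with $G_1\le\langle G_2\cup U\rangle$. *)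

theory Defs
  imports Main "HOL-Library.Countable" "HOL-Library.Disjoint_Sets"
begin

text \<open>Omega is the (countably infinite) universe of the type 'a. A permutation of Omega
is a bijection 'a => 'a; the image of a point x under g is written g x (the paper's x g).\<close>

definition Sym :: "('a \<Rightarrow> 'a) set" where
  "Sym = {f. bij f}"

definition is_subgroup :: "('a \<Rightarrow> 'a) set \<Rightarrow> bool" where
  "is_subgroup H \<longleftrightarrow> H \<subseteq> Sym \<and> id \<in> H \<and>
     (\<forall>f\<in>H. \<forall>g\<in>H. f \<circ> g \<in> H) \<and> (\<forall>f\<in>H. inv f \<in> H)"

definition gen :: "('a \<Rightarrow> 'a) set \<Rightarrow> ('a \<Rightarrow> 'a) set" where
  "gen X = \<Inter>{H. is_subgroup H \<and> X \<subseteq> H}"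

definition preceq :: "('a \<Rightarrow> 'a) set \<Rightarrow> ('a \<Rightarrow> 'a) set \<Rightarrow> bool" where
  "preceq G1 G2 \<longleftrightarrow> (\<exists>U. finite U \<and> U \<subseteq> Sym \<and> G1 \<subseteq> gen (G2 \<union> U))"

definition stab_part :: "'a set set \<Rightarrow> ('a \<Rightarrow> 'a) set" where
  "stab_part A = {f \<in> Sym. \<forall>X\<in>A. f ` X = X}"

end

theory Submission
  imports Defs "HOL-Library.Countable_Set"
begin

(* Enumerate the 2-element blocks of A0 as {p (k, True), p (k, False)}. An element of S_(A0) is
   then the permutation that swaps the two points of the k-th block for k in some set J and
   fixes everything else. Arrange distinct \<alpha>- and \<beta>-points into chains, two for each k.
   A single g \<in> G that sends \<alpha>-points to \<beta>-points exactly on the chains with k \<in> J makes the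
   commutator of g with a fixed involution u flip the two chains of every k \<in> J, at all
   positions at once. Commuting this flip with a fixed shift s along the chains leaves only
   the flip at the first positions, and a fixed \<sigma> carries the first positions onto the blocks.
   Hence S_(A0) lies in the group generated by G, u, s and \<sigma>. *)

definition induced_perm :: "('b \<Rightarrow> 'a) \<Rightarrow> ('b \<Rightarrow> 'b) \<Rightarrow> 'a \<Rightarrow> 'a" where
  "induced_perm q \<phi> x = (if x \<in> range q then q (\<phi> (inv q x)) else x)"

lemma induced_perm_image [simp]: "inj q \<Longrightarrow> induced_perm q \<phi> (q b) = q (\<phi> b)"
  by (simp add: induced_perm_def)

lemma induced_perm_outside [simp]: "x \<notin> range q \<Longrightarrow> induced_perm q \<phi> x = x"
  by (simp add: induced_perm_def)

lemma induced_perm_comp: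
  assumes "inj q"
  shows "induced_perm q \<phi> \<circ> induced_perm q \<psi> = induced_perm q (\<phi> \<circ> \<psi>)"
proof
  fix x show "(induced_perm q \<phi> \<circ> induced_perm q \<psi>) x = induced_perm q (\<phi> \<circ> \<psi>) x"
    using assms by (cases "x \<in> range q") auto
qed

lemma induced_perm_id: "inj q \<Longrightarrow> induced_perm q id = id"
  by (auto simp: fun_eq_iff induced_perm_def)

lemma bij_induced_perm:
  assumes "inj q" "bij \<phi>"
  shows "bij (induced_perm q \<phi>)"
proof (rule o_bij)
  show "induced_perm q (inv \<phi>) \<circ> induced_perm q \<phi> = id"
    "induced_perm q \<phi> \<circ> induced_perm q (inv \<phi>) = id"
    using assms bij_is_inj[of \<phi>] bij_is_surj[of \<phi>]
    by (simp_all add: induced_perm_comp induced_perm_id inj_iff surj_iff)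
qed

lemma induced_perm_conj:
  assumes "bij g" "inj q"
  shows "g \<circ> induced_perm q \<phi> \<circ> inv g = induced_perm (g \<circ> q) \<phi>"
proof
  have "inj (g \<circ> q)" using assms by (simp add: bij_is_inj inj_compose)
  fix x show "(g \<circ> induced_perm q \<phi> \<circ> inv g) x = induced_perm (g \<circ> q) \<phi> x"
  proof (cases "x \<in> range (g \<circ> q)")
    case True
    then obtain b where "x = g (q b)" by auto
    then show ?thesis
      using assms induced_perm_image[OF \<open>inj (g \<circ> q)\<close>, of \<phi> b] by (simp add: bij_is_inj)
  next
    case False
    then have "inv g x \<notin> range q" using assms by (metis bij_inv_eq_iff comp_apply rangeE rangeI)
    then show ?thesis using assms False by (simp add: bij_is_surj surj_f_inv_f)
  qed
qed

lemma induced_perm_comp_inj: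
  assumes "inj a" "inj h"
  shows "induced_perm (a \<circ> h) \<phi> = induced_perm a (induced_perm h \<phi>)"
proof
  fix x show "induced_perm (a \<circ> h) \<phi> x = induced_perm a (induced_perm h \<phi>) x"
  proof (cases "x \<in> range a")
    case True
    then obtain b where "x = a b" by auto
    have "inj (a \<circ> h)" using assms by (rule inj_compose)
    moreover have "a b \<notin> range (a \<circ> h)" if "b \<notin> range h"
      using that assms(1) by (auto dest: injD)
    ultimately show ?thesis
      using assms \<open>x = a b\<close> induced_perm_image[OF \<open>inj (a \<circ> h)\<close>]
      by (cases "b \<in> range h") auto
  next
    case False
    then have "x \<notin> range (a \<circ> h)" by auto
    with False show ?thesis by simp
  qed
qed

definition flip_blocks :: "'k set \<Rightarrow> 'k \<times> bool \<Rightarrow> 'k \<times> bool" where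
  "flip_blocks J = (\<lambda>(k, e). (k, if k \<in> J then \<not> e else e))"

lemma flip_blocks_involution: "flip_blocks J \<circ> flip_blocks J = id"
  by (auto simp: flip_blocks_def fun_eq_iff)

lemma induced_perm_shift_cancel:
  fixes \<phi> :: "'b \<Rightarrow> 'b"
  assumes "\<phi> \<circ> \<phi> = id"
  shows "map_prod \<phi> id \<circ> induced_perm (map_prod id Suc) (map_prod \<phi> id)
    = induced_perm (\<lambda>b. (b, 0::nat)) \<phi>"
proof
  have inj_shift: "inj (map_prod (id :: 'b \<Rightarrow> 'b) Suc)" and inj_zero: "inj (\<lambda>b::'b. (b, 0::nat))"
    by (auto intro: injI)
  fix x :: "'b \<times> nat"
  obtain b j where x: "x = (b, j)" by fastforce
  show "(map_prod \<phi> id \<circ> induced_perm (map_prod id Suc) (map_prod \<phi> id)) x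
    = induced_perm (\<lambda>b. (b, 0)) \<phi> x"
  proof (cases j)
    case 0
    then have "x \<notin> range (map_prod id Suc)" using x by auto
    then show ?thesis using x 0 induced_perm_image[OF inj_zero] by simp
  next
    case (Suc j')
    then have "induced_perm (map_prod id Suc) (map_prod \<phi> id) x = (\<phi> b, Suc j')"
      using x induced_perm_image[OF inj_shift, of "map_prod \<phi> id" "(b, j')"] by simp
    moreover have "x \<notin> range (\<lambda>b. (b, 0::nat))" using x Suc by auto
    ultimately show ?thesis using x Suc assms by (simp add: pointfree_idE)
  qed
qed

lemma induced_perm_parity_flips:
  fixes J :: "'k set"
  shows "induced_perm (\<lambda>((k, e), m). ((k, e), 2 * m + (if k \<in> J then 1 else 0)))
      (map_prod (flip_blocks UNIV) id)
    \<circ> induced_perm (\<lambda>(b, m::nat). (b, 2 * m)) (map_prod (flip_blocks UNIV) id)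
    = map_prod (flip_blocks J) id"
  (is "induced_perm ?h1 ?F \<circ> induced_perm ?h0 ?F = _")
proof
  have inj_h0: "inj ?h0" and inj_h1: "inj ?h1" by (auto intro!: injI split: if_splits)
  fix x :: "(('k \<times> bool) \<times> nat)"
  obtain k e j where x: "x = ((k, e), j)" by (metis prod.collapse)
  obtain m where "j = 2 * m \<or> j = 2 * m + 1" by (metis oddE evenE)
  then consider "j = 2 * m" | "j = 2 * m + 1" by blast
  then show "(induced_perm ?h1 ?F \<circ> induced_perm ?h0 ?F) x = map_prod (flip_blocks J) id x"
  proof cases
    case 1
    then have "induced_perm ?h0 ?F x = ((k, \<not> e), 2 * m)"
      using x induced_perm_image[OF inj_h0, of ?F "((k, e), m)"] by (simp add: flip_blocks_def)
    moreover have "((k, \<not> e), 2 * m) \<notin> range ?h1" if "k \<in> J" using that by auto presburger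
    moreover have "induced_perm ?h1 ?F ((k, \<not> e), 2 * m) = ((k, e), 2 * m)" if "k \<notin> J"
      using that induced_perm_image[OF inj_h1, of ?F "((k, \<not> e), m)"] by (simp add: flip_blocks_def)
    ultimately show ?thesis using x 1 by (cases "k \<in> J") (auto simp: flip_blocks_def)
  next
    case 2
    then have "x \<notin> range ?h0" using x by auto presburger
    moreover have "induced_perm ?h1 ?F x = ((k, \<not> e), 2 * m + 1)" if "k \<in> J"
      using that x 2 induced_perm_image[OF inj_h1, of ?F "((k, e), m)"]
      by (simp add: flip_blocks_def)
    moreover have "x \<notin> range ?h1" if "k \<notin> J" using x 2 that by auto presburger
    ultimately show ?thesis using x 2 by (cases "k \<in> J") (auto simp: flip_blocks_def)
  qed
qed

(* Choosing \<iota> with infinite co-range leaves infinitely many points outside all chains, which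
   is what allows the shift along the chains to be extended to a permutation. *)
definition interleave :: "(nat \<Rightarrow> 'a) \<Rightarrow> (nat \<Rightarrow> 'a) \<Rightarrow> ('b \<times> nat \<Rightarrow> nat) \<Rightarrow> 'b \<times> nat \<Rightarrow> 'a" where
  "interleave \<alpha> \<beta> \<iota> = (\<lambda>(b, j). (if even j then \<alpha> else \<beta>) (\<iota> (b, j div 2)))"

lemma interleave_even [simp]: "interleave \<alpha> \<beta> \<iota> (b, 2 * m) = \<alpha> (\<iota> (b, m))"
  by (simp add: interleave_def)

lemma inj_interleave:
  assumes "inj \<alpha>" "inj \<beta>" "\<And>i j. \<alpha> i \<noteq> \<beta> j" "inj \<iota>"
  shows "inj (interleave \<alpha> \<beta> \<iota>)"
proof (rule injI)
  fix x y assume eq: "interleave \<alpha> \<beta> \<iota> x = interleave \<alpha> \<beta> \<iota> y"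
  obtain b j c l where xy: "x = (b, j)" "y = (c, l)" by fastforce
  have "even j \<longleftrightarrow> even l"
    using eq xy assms(3) assms(3)[THEN not_sym] by (auto simp: interleave_def split: if_splits)
  moreover have "\<iota> (b, j div 2) = \<iota> (c, l div 2)"
    using eq xy assms(1,2) \<open>even j \<longleftrightarrow> even l\<close>
    by (auto simp: interleave_def dest: injD split: if_splits)
  then have "b = c" "j div 2 = l div 2" using assms(4) by (auto dest: injD)
  ultimately show "x = y" using xy by (metis div_mult_mod_eq mod2_eq_if)
qed

lemma infinite_compl_range_interleave:
  assumes "inj \<alpha>" "\<And>i j. \<alpha> i \<noteq> \<beta> j" "infinite (- range \<iota>)"
  shows "infinite (- range (interleave \<alpha> \<beta> \<iota>))"
proof -
  have "\<alpha> ` (- range \<iota>) \<subseteq> - range (interleave \<alpha> \<beta> \<iota>)"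
    using assms(1,2) by (auto simp: interleave_def inj_eq split: if_splits)
  moreover have "infinite (\<alpha> ` (- range \<iota>))"
    using assms(1,3) by (simp add: finite_image_iff inj_on_subset)
  ultimately show ?thesis using finite_subset by blast
qed

(* u swaps the \<alpha>-points of the chains (k, True) and (k, False); its conjugate by g swaps the
   \<beta>-points instead when k \<in> J and the same \<alpha>-points otherwise. So the product flips the two
   chains completely for k \<in> J and cancels for k \<notin> J. *)
lemma swap_commutator_interleave:
  assumes "bij g" "inj \<alpha>" "inj \<beta>" "\<And>i j. \<alpha> i \<noteq> \<beta> j" "inj \<iota>"
    and g: "\<And>k e m. g (\<alpha> (\<iota> ((k, e), m))) = (if k \<in> J then \<beta> else \<alpha>) (\<iota> ((k, e), m))"
  defines "u \<equiv> induced_perm (\<alpha> \<circ> \<iota>) (map_prod (flip_blocks UNIV) id)"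
  shows "g \<circ> u \<circ> inv g \<circ> u = induced_perm (interleave \<alpha> \<beta> \<iota>) (map_prod (flip_blocks J) id)"
proof -
  let ?a = "interleave \<alpha> \<beta> \<iota>" and ?F = "map_prod (flip_blocks UNIV) id"
  let ?h0 = "\<lambda>(b, m::nat). (b, 2 * m)"
    and ?h1 = "\<lambda>((k, e), m::nat). ((k, e), 2 * m + (if k \<in> J then 1 else 0))"
  have inj_a: "inj ?a" using assms(2-5) by (rule inj_interleave)
  have inj_h0: "inj ?h0" and inj_h1: "inj ?h1" by (auto intro!: injI split: if_splits)
  have "\<alpha> \<circ> \<iota> = ?a \<circ> ?h0" by auto
  moreover have "g \<circ> (\<alpha> \<circ> \<iota>) = ?a \<circ> ?h1" by (auto simp: fun_eq_iff g interleave_def)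
  moreover have "inj (\<alpha> \<circ> \<iota>)" using assms(2,5) by (rule inj_compose)
  ultimately have "g \<circ> u \<circ> inv g \<circ> u = induced_perm (?a \<circ> ?h1) ?F \<circ> induced_perm (?a \<circ> ?h0) ?F"
    using assms(1) unfolding u_def by (simp add: induced_perm_conj)
  also have "\<dots> = induced_perm ?a (induced_perm ?h1 ?F \<circ> induced_perm ?h0 ?F)"
    by (simp only: induced_perm_comp_inj[OF inj_a inj_h1] induced_perm_comp_inj[OF inj_a inj_h0]
        induced_perm_comp[OF inj_a])
  finally show ?thesis by (simp add: induced_perm_parity_flips)
qed

(* s Y s\<^sup>-\<^sup>1 is the same flip at every position except position 0, so composing it with the
   involution Y leaves only the flip at position 0. *)
lemma shift_commutator:
  fixes a :: "'b \<times> nat \<Rightarrow> 'a"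
  assumes "inj a" "bij s" "s \<circ> a = a \<circ> map_prod id Suc" "\<phi> \<circ> \<phi> = id"
  defines "Y \<equiv> induced_perm a (map_prod \<phi> id)"
  shows "Y \<circ> s \<circ> Y \<circ> inv s = induced_perm (\<lambda>b. a (b, 0)) \<phi>"
proof -
  have inj_shift: "inj (map_prod (id :: 'b \<Rightarrow> 'b) Suc)" and inj_zero: "inj (\<lambda>b::'b. (b, 0::nat))"
    by (auto intro: injI)
  have "s \<circ> Y \<circ> inv s = induced_perm a (induced_perm (map_prod id Suc) (map_prod \<phi> id))"
    using assms(1-3) inj_shift unfolding Y_def
    by (simp add: induced_perm_conj induced_perm_comp_inj)
  then have "Y \<circ> s \<circ> Y \<circ> inv s = induced_perm a (induced_perm (\<lambda>b. (b, 0)) \<phi>)"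
    using assms(1,4) unfolding Y_def
    by (simp add: o_assoc[symmetric] induced_perm_comp induced_perm_shift_cancel)
  also have "\<dots> = induced_perm (a \<circ> (\<lambda>b. (b, 0))) \<phi>"
    using assms(1) inj_zero by (simp add: induced_perm_comp_inj)
  finally show ?thesis by (simp add: comp_def)
qed

lemma gen_base: "f \<in> X \<Longrightarrow> f \<in> gen X"
  by (auto simp: gen_def)

lemma gen_comp: "f \<in> gen X \<Longrightarrow> g \<in> gen X \<Longrightarrow> f \<circ> g \<in> gen X"
  by (auto simp: gen_def is_subgroup_def)

lemma gen_inv: "f \<in> gen X \<Longrightarrow> inv f \<in> gen X"
  by (auto simp: gen_def is_subgroup_def)

lemma extend_inj_to_bij:
  fixes q h :: "'b \<Rightarrow> 'a::countable"
  assumes "inj q" "inj h" "infinite (- range q)" "infinite (- range h)"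
  obtains \<sigma> where "bij \<sigma>" "\<sigma> \<circ> q = h"
proof -
  obtain e1 :: "'a \<Rightarrow> nat" where e1: "bij_betw e1 (- range q) UNIV"
    using countableE_infinite[OF countableI_type assms(3)] by blast
  obtain e2 :: "'a \<Rightarrow> nat" where e2: "bij_betw e2 (- range h) UNIV"
    using countableE_infinite[OF countableI_type assms(4)] by blast
  define \<sigma> where "\<sigma> x = (if x \<in> range q then h (inv q x) else inv_into (- range h) e2 (e1 x))" for x
  have "bij_betw (h \<circ> inv q) (range q) (range h)"
    using assms(1,2) by (metis bij_betw_comp_iff bij_betw_inv_into inj_on_imp_bij_betw)
  then have on_range: "bij_betw \<sigma> (range q) (range h)"
    by (rule bij_betw_cong[THEN iffD1, rotated]) (auto simp: \<sigma>_def)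
  have "bij_betw (inv_into (- range h) e2 \<circ> e1) (- range q) (- range h)"
    using e1 e2 bij_betw_inv_into bij_betw_trans by blast
  then have off_range: "bij_betw \<sigma> (- range q) (- range h)"
    by (rule bij_betw_cong[THEN iffD1, rotated]) (auto simp: \<sigma>_def)
  have "bij_betw \<sigma> (range q \<union> - range q) (range h \<union> - range h)"
    by (rule bij_betw_combine[OF on_range off_range]) auto
  then have "bij \<sigma>" by simp
  moreover have "\<sigma> \<circ> q = h" using assms(1) by (auto simp: \<sigma>_def)
  ultimately show thesis by (rule that)
qed

lemma inj_to_nat_coinfinite:
  obtains \<iota> :: "'b::countable \<Rightarrow> nat" where "inj \<iota>" "infinite (- range \<iota>)"
proof
  show "inj (\<lambda>t::'b. 2 * to_nat t)" by (rule injI) simp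
  have "range (\<lambda>n. 2 * n + 1) \<subseteq> - range (\<lambda>t::'b. 2 * to_nat t)" by auto presburger
  moreover have "infinite (range (\<lambda>n::nat. 2 * n + 1))"
    by (rule range_inj_infinite) (simp add: inj_def)
  ultimately show "infinite (- range (\<lambda>t::'b. 2 * to_nat t))" using finite_subset by blast
qed

lemma choose_perm_by_blocks:
  assumes "\<And>\<gamma>. (\<forall>i. \<gamma> i \<in> {\<alpha> i, \<beta> i}) \<Longrightarrow> \<exists>g\<in>G. \<forall>i. \<gamma> i = g (\<alpha> i)" "inj \<iota>"
  shows "\<exists>g\<in>G. \<forall>k e m. g (\<alpha> (\<iota> ((k, e), m))) = (if k \<in> J then \<beta> else \<alpha>) (\<iota> ((k, e), m))"
proof -
  define \<gamma> where "\<gamma> i = (if i \<in> \<iota> ` {t. fst (fst t) \<in> J} then \<beta> i else \<alpha> i)" for i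
  have "\<forall>i. \<gamma> i \<in> {\<alpha> i, \<beta> i}" by (simp add: \<gamma>_def)
  then obtain g where "g \<in> G" "\<forall>i. \<gamma> i = g (\<alpha> i)" using assms(1) by blast
  moreover have "\<gamma> (\<iota> ((k, e), m)) = (if k \<in> J then \<beta> else \<alpha>) (\<iota> ((k, e), m))" for k e m
    using assms(2) by (simp add: \<gamma>_def inj_image_mem_iff)
  ultimately show ?thesis by metis
qed

lemma block_flip_in_gen:
  assumes "is_subgroup G" "inj \<alpha>" "inj \<beta>" "\<And>i j. \<alpha> i \<noteq> \<beta> j"
    and choice: "\<And>\<gamma>. (\<forall>i. \<gamma> i \<in> {\<alpha> i, \<beta> i}) \<Longrightarrow> \<exists>g\<in>G. \<forall>i. \<gamma> i = g (\<alpha> i)"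
    and "inj \<iota>" "bij s" "s \<circ> interleave \<alpha> \<beta> \<iota> = interleave \<alpha> \<beta> \<iota> \<circ> map_prod id Suc"
    and "bij \<sigma>" "\<sigma> \<circ> (\<lambda>b. interleave \<alpha> \<beta> \<iota> (b, 0)) = p"
  defines "u \<equiv> induced_perm (\<alpha> \<circ> \<iota>) (map_prod (flip_blocks UNIV) id)"
  shows "induced_perm p (flip_blocks J) \<in> gen (G \<union> {u, s, \<sigma>})"
proof -
  let ?a = "interleave \<alpha> \<beta> \<iota>"
  have "inj ?a" using assms(2-4,6) by (rule inj_interleave)
  then have inj_start: "inj (\<lambda>b. ?a (b, 0))" by (auto intro!: injI dest: injD)
  obtain g where "g \<in> G"
    and g: "\<forall>k e m. g (\<alpha> (\<iota> ((k, e), m))) = (if k \<in> J then \<beta> else \<alpha>) (\<iota> ((k, e), m))"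
    using choose_perm_by_blocks[OF choice \<open>inj \<iota>\<close>] by blast
  have "bij g" using \<open>g \<in> G\<close> assms(1) by (auto simp: is_subgroup_def Sym_def)
  define Y where "Y = g \<circ> u \<circ> inv g \<circ> u"
  have Y: "Y = induced_perm ?a (map_prod (flip_blocks J) id)"
    unfolding Y_def u_def using \<open>bij g\<close> assms(2-4,6) g by (intro swap_commutator_interleave) auto
  have "Y \<circ> s \<circ> Y \<circ> inv s = induced_perm (\<lambda>b. ?a (b, 0)) (flip_blocks J)"
    unfolding Y using \<open>inj ?a\<close> assms(7,8) flip_blocks_involution by (rule shift_commutator)
  then have "induced_perm p (flip_blocks J) = \<sigma> \<circ> (Y \<circ> s \<circ> Y \<circ> inv s) \<circ> inv \<sigma>"
    using assms(9,10) inj_start by (simp add: induced_perm_conj)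
  moreover have "g \<in> gen (G \<union> {u, s, \<sigma>})" "u \<in> gen (G \<union> {u, s, \<sigma>})"
    "s \<in> gen (G \<union> {u, s, \<sigma>})" "\<sigma> \<in> gen (G \<union> {u, s, \<sigma>})"
    using \<open>g \<in> G\<close> by (auto intro: gen_base)
  ultimately show ?thesis unfolding Y_def by (simp only: gen_comp gen_inv)
qed

lemma block_flips_in_gen:
  fixes G :: "('a::countable \<Rightarrow> 'a) set" and \<alpha> \<beta> :: "nat \<Rightarrow> 'a"
    and p :: "'k::countable \<times> bool \<Rightarrow> 'a"
  assumes "is_subgroup G" "inj \<alpha>" "inj \<beta>" "\<And>i j. \<alpha> i \<noteq> \<beta> j"
    and "\<And>\<gamma>. (\<forall>i. \<gamma> i \<in> {\<alpha> i, \<beta> i}) \<Longrightarrow> \<exists>g\<in>G. \<forall>i. \<gamma> i = g (\<alpha> i)"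
    and "inj p" "infinite (- range p)"
  obtains U where "finite U" "U \<subseteq> Sym"
    "range (\<lambda>J. induced_perm p (flip_blocks J)) \<subseteq> gen (G \<union> U)"
proof -
  obtain \<iota> :: "('k \<times> bool) \<times> nat \<Rightarrow> nat" where "inj \<iota>" "infinite (- range \<iota>)"
    by (rule inj_to_nat_coinfinite)
  define a where "a = interleave \<alpha> \<beta> \<iota>"
  have "inj a" unfolding a_def using assms(2-4) \<open>inj \<iota>\<close> by (rule inj_interleave)
  have "infinite (- range a)"
    unfolding a_def using assms(2,4) \<open>infinite (- range \<iota>)\<close>
    by (rule infinite_compl_range_interleave)
  have inj_shifted: "inj (a \<circ> map_prod id Suc)" using \<open>inj a\<close> by (auto intro!: injI dest: injD)
  have infinite_shifted: "infinite (- range (a \<circ> map_prod id Suc))"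
    using \<open>infinite (- range a)\<close> by (rule infinite_super[rotated]) auto
  obtain s where s: "bij s" "s \<circ> a = a \<circ> map_prod id Suc"
    by (rule extend_inj_to_bij[OF \<open>inj a\<close> inj_shifted \<open>infinite (- range a)\<close> infinite_shifted])
  have inj_start: "inj (\<lambda>b. a (b, 0))" using \<open>inj a\<close> by (auto intro!: injI dest: injD)
  have infinite_start: "infinite (- range (\<lambda>b. a (b, 0)))"
    using \<open>infinite (- range a)\<close> by (rule infinite_super[rotated]) auto
  obtain \<sigma> where \<sigma>: "bij \<sigma>" "\<sigma> \<circ> (\<lambda>b. a (b, 0)) = p"
    by (rule extend_inj_to_bij[OF inj_start assms(6) infinite_start assms(7)])
  define u where "u = induced_perm (\<alpha> \<circ> \<iota>) (map_prod (flip_blocks UNIV) id)"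
  have "map_prod (flip_blocks UNIV) id \<circ> map_prod (flip_blocks UNIV) id = id"
    by (simp add: map_prod.comp flip_blocks_involution map_prod.id)
  then have "bij u" unfolding u_def
    using assms(2) \<open>inj \<iota>\<close> by (metis bij_induced_perm inj_compose o_bij)
  have "induced_perm p (flip_blocks J) \<in> gen (G \<union> {u, s, \<sigma>})" for J
    unfolding u_def using assms(1-5) \<open>inj \<iota>\<close> s \<sigma> unfolding a_def by (rule block_flip_in_gen)
  then have "range (\<lambda>J. induced_perm p (flip_blocks J)) \<subseteq> gen (G \<union> {u, s, \<sigma>})" by auto
  moreover have "finite {u, s, \<sigma>}" "{u, s, \<sigma>} \<subseteq> Sym"
    using \<open>bij u\<close> s(1) \<sigma>(1) by (simp_all add: Sym_def)
  ultimately show thesis by (intro that)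
qed

lemma enumerate_two_element_sets:
  assumes "countable T" "infinite T" "\<forall>X\<in>T. card X = 2"
  obtains p :: "nat \<times> bool \<Rightarrow> 'a" where "bij_betw (\<lambda>k. {p (k, True), p (k, False)}) UNIV T"
proof -
  have B: "bij_betw (from_nat_into T) UNIV T" using assms(1,2) by (rule bij_betw_from_nat_into)
  then have "from_nat_into T k \<in> T" for k using bij_betwE by blast
  then have "\<forall>k. \<exists>x y. from_nat_into T k = {x, y}" using assms(3) card_2_iff by metis
  then obtain p1 p2 where p12: "\<And>k. from_nat_into T k = {p1 k, p2 k}" by metis
  show thesis
  proof
    show "bij_betw (\<lambda>k. {(\<lambda>(k, e). if e then p1 k else p2 k) (k, True),
        (\<lambda>(k, e). if e then p1 k else p2 k) (k, False)}) UNIV T"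
      using B by (rule bij_betw_cong[THEN iffD1, rotated]) (simp add: p12)
  qed
qed

lemma enumerate_pair_blocks:
  fixes A :: "'a::countable set set"
  assumes part: "partition_on UNIV A" and sizes: "\<forall>X\<in>A. card X = 1 \<or> card X = 2"
    and "infinite {X \<in> A. card X = 1}" "infinite {X \<in> A. card X = 2}"
  obtains p :: "nat \<times> bool \<Rightarrow> 'a" where "inj p" "range (\<lambda>k. {p (k, True), p (k, False)}) \<subseteq> A"
    "(\<lambda>x. {x}) ` (- range p) \<subseteq> A" "infinite (- range p)"
proof -
  let ?T = "{X \<in> A. card X = 2}"
  have "?T \<subseteq> Collect finite" by (auto intro: card_ge_0_finite)
  then have countable: "countable ?T" using countable_Collect_finite countable_subset by blast
  have pairs: "\<forall>X\<in>?T. card X = 2" by simp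
  obtain p :: "nat \<times> bool \<Rightarrow> 'a" where bij: "bij_betw (\<lambda>k. {p (k, True), p (k, False)}) UNIV ?T"
    by (rule enumerate_two_element_sets[OF countable assms(4) pairs])
  let ?B = "\<lambda>k. {p (k, True), p (k, False)}"
  have blocks: "?B k \<in> A" and card_B: "card (?B k) = 2" for k using bij_betwE[OF bij] by auto
  have distinct: "p (k, True) \<noteq> p (k, False)" for k
    using card_B[of k] by (cases "p (k, True) = p (k, False)") auto
  have same_block: "X = Y" if "X \<in> A" "Y \<in> A" "x \<in> X" "x \<in> Y" for X Y x
    using disjointD[OF partition_onD2[OF part]] that by blast
  have in_block: "p (k, e) \<in> ?B k" for k e by (cases e) auto
  have "inj p"
  proof (rule injI)
    fix x y assume eq: "p x = p y"
    obtain k e l d where xy: "x = (k, e)" "y = (l, d)" by fastforce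
    have "p (k, e) \<in> ?B l" using eq xy in_block[of l d] by simp
    then have "?B k = ?B l" by (rule same_block[OF blocks blocks in_block])
    then have "k = l" using bij by (auto simp: bij_betw_def dest: injD)
    then show "x = y" using xy eq distinct[of k] by (cases e; cases d) auto
  qed
  have range_B: "range ?B = ?T" using bij by (simp add: bij_betw_def)
  have no_pair: "x \<notin> range p" if "{x} \<in> A" for x
  proof
    assume "x \<in> range p"
    then obtain k e where "x = p (k, e)" by auto
    then have "{x} = ?B k" using same_block[OF that blocks _ in_block] by simp
    then show False using card_B[of k] by simp
  qed
  have singletons: "{x} \<in> A" if "x \<notin> range p" for x
  proof -
    obtain X where X: "X \<in> A" "x \<in> X" using partition_onD1[OF part] by blast
    have "X \<notin> ?T"
    proof
      assume "X \<in> ?T"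
      then obtain k where "X = ?B k" unfolding range_B[symmetric] by blast
      then show False using X(2) that by auto
    qed
    then have "card X = 1" using X sizes by auto
    then show ?thesis using X by (auto simp: card_1_singleton_iff)
  qed
  have "{X \<in> A. card X = 1} \<subseteq> (\<lambda>x. {x}) ` (- range p)"
    using no_pair by (auto simp: card_1_singleton_iff)
  then have "infinite (- range p)" using assms(3) finite_surj by blast
  moreover have "range ?B \<subseteq> A" using range_B by auto
  moreover have "(\<lambda>x. {x}) ` (- range p) \<subseteq> A" using singletons by auto
  ultimately show thesis using \<open>inj p\<close> by (intro that)
qed

lemma stab_part_eq_induced_flip:
  assumes "f \<in> stab_part A" "inj p"
    and pairs: "range (\<lambda>k. {p (k, True), p (k, False)}) \<subseteq> A"
    and singletons: "(\<lambda>x. {x}) ` (- range p) \<subseteq> A"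
  shows "f = induced_perm p (flip_blocks {k. f (p (k, True)) \<noteq> p (k, True)})"
proof
  have "inj f" and f_block: "\<And>X. X \<in> A \<Longrightarrow> f ` X = X"
    using assms(1) by (auto simp: stab_part_def Sym_def bij_is_inj)
  fix x show "f x = induced_perm p (flip_blocks {k. f (p (k, True)) \<noteq> p (k, True)}) x"
  proof (cases "x \<in> range p")
    case True
    then obtain k e where x: "x = p (k, e)" by auto
    have "f ` {p (k, True), p (k, False)} = {p (k, True), p (k, False)}"
      using f_block pairs by blast
    moreover have "p (k, True) \<noteq> p (k, False)" using assms(2) by (auto dest: injD)
    ultimately show ?thesis using x assms(2) \<open>inj f\<close>
      by (cases e) (auto simp: flip_blocks_def doubleton_eq_iff inj_eq)
  next
    case False
    then have "f ` {x} = {x}" using f_block singletons by blast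
    with False show ?thesis by simp
  qed
qed

theorem lemma7p1:
  fixes G :: "('a::countable \<Rightarrow> 'a) set"
    and \<alpha> \<beta> :: "nat \<Rightarrow> 'a"
    and A0 :: "'a set set"
  assumes "infinite (UNIV :: 'a set)"
    and "is_subgroup G"
    and "inj \<alpha>" and "inj \<beta>" and "\<And>i j. \<alpha> i \<noteq> \<beta> j"
    and "\<And>\<gamma>. (\<forall>i. \<gamma> i \<in> {\<alpha> i, \<beta> i}) \<Longrightarrow> \<exists>g\<in>G. \<forall>i. \<gamma> i = g (\<alpha> i)"
    and "partition_on (UNIV :: 'a set) A0"
    and "infinite {X \<in> A0. card X = 1}"
    and "infinite {X \<in> A0. card X = 2}"
    and "\<forall>X\<in>A0. card X = 1 \<or> card X = 2"
  shows "preceq (stab_part A0) G"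
proof -
  obtain p :: "nat \<times> bool \<Rightarrow> 'a"
    where p: "inj p" "range (\<lambda>k. {p (k, True), p (k, False)}) \<subseteq> A0"
      "(\<lambda>x. {x}) ` (- range p) \<subseteq> A0" "infinite (- range p)"
    by (rule enumerate_pair_blocks[OF assms(7,10,8,9)])
  obtain U where "finite U" "U \<subseteq> Sym"
    and flips: "range (\<lambda>J. induced_perm p (flip_blocks J)) \<subseteq> gen (G \<union> U)"
    by (rule block_flips_in_gen[OF assms(2-6) p(1,4)])
  have "stab_part A0 \<subseteq> gen (G \<union> U)"
  proof
    fix f assume "f \<in> stab_part A0"
    then have "f = induced_perm p (flip_blocks {k. f (p (k, True)) \<noteq> p (k, True)})"
      using p(1-3) by (rule stab_part_eq_induced_flip)
    then show "f \<in> gen (G \<union> U)" using flips by auto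
  qed
  with \<open>finite U\<close> \<open>U \<subseteq> Sym\<close> show ?thesis unfolding preceq_def by blast
qed

end
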